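(* Let $k\in\{0,1,-1\}$, $c\neq0$, $m>0$ with $m\neq1$, $a_1\neq0$, $a_3$ real, $\hat a=(a_1,0,a_3)^T$, and consider the complex system $$\frac{d\hat K}{dt}=\hat K\times\omega(\hat K)+\hat P\times\hat a,\qquad \frac{d\hat P}{dt}=\hat P\times\omega(\hat K)+k\,(\hat K\times\hat a),\qquad \omega(\hat K)=\Big(\frac{m}{c}K_1,\frac{m}{c}K_2,\frac1cK_3\Big)^T.$$ Consider Laurent series solutions $\hat K(t)=t^{-1}\sum_{n\ge0}K_nt^n$, $\hat P(t)=t^{-2}\sum_{n\ge0}P_nt^n$ whose leading coefficients $K_0=(p_0,q_0,r_0)^T$, $P_0=(f_0,g_0,h_0)^T$ have $r_0=0$, i.e. $p_0=0$, $q_0=\frac{2\varepsilon ic}{m}$, $r_0=0$, $f_0=i\varepsilon h_0$, $g_0=0$, $h_0=\frac{2c}{m(a_3+\varepsilon ia_1)}$ with $\varepsilon=\pm1$. Then all such solutions (i.e. all solutions $(K_n,P_n)_{n\ge1}$ of the recursive relations obtained by equating coefficients of equal powers of $t$) are parametrized by at most four arbitrary complex constants; hence they do not provide a general (six-parameter) meromorphic solution of the system.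
   Context: $\times$ is the complex bilinear vector product on $\mathbb{C}^3$; time $t$ is complex. A general meromorphic solution means a family of such Laurent series solutions depending on six arbitrary complex constants (the dimension of the phase space), as is needed for meromorphic solutions on an open set of initial conditions in $\mathbb{C}^6$. *)

theory Defs
  imports "HOL-Analysis.Analysis"
begin

definition cvec3 :: "complex \<Rightarrow> complex \<Rightarrow> complex \<Rightarrow> complex^3" where
  "cvec3 x y z = (\<chi> i. if i = 1 then x else if i = 2 then y else z)"

definition ccross :: "complex^3 \<Rightarrow> complex^3 \<Rightarrow> complex^3" (infixr "\<times>\<^sub>c" 80) where
  "u \<times>\<^sub>c v = cvec3 (u$2 * v$3 - u$3 * v$2) (u$3 * v$1 - u$1 * v$3) (u$1 * v$2 - u$2 * v$1)"

definition omega :: "real \<Rightarrow> real \<Rightarrow> complex^3 \<Rightarrow> complex^3" where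
  "omega m c K = cvec3 (of_real (m/c) * K$1) (of_real (m/c) * K$2) (of_real (1/c) * K$3)"

text \<open>Recursive relations for the coefficients of the formal Laurent series
  K(t) = t^-1 sum K_n t^n, P(t) = t^-2 sum P_n t^n, obtained by equating
  coefficients of t^(n-2) in the K-equation and t^(n-3) in the P-equation, for n >= 1.\<close>
definition laurent_rec ::
  "int \<Rightarrow> real \<Rightarrow> real \<Rightarrow> complex^3 \<Rightarrow> (nat \<Rightarrow> complex^3) \<Rightarrow> (nat \<Rightarrow> complex^3) \<Rightarrow> bool" where
  "laurent_rec k m c a K P \<longleftrightarrow>
     (\<forall>n\<ge>1.
        (of_nat n - 1) *s K n = (\<Sum>i\<le>n. K i \<times>\<^sub>c omega m c (K (n - i))) + P n \<times>\<^sub>c a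
      \<and> (of_nat n - 2) *s P n = (\<Sum>i\<le>n. P i \<times>\<^sub>c omega m c (K (n - i)))
            + (if n \<ge> 2 then of_int k *s (K (n - 2) \<times>\<^sub>c a) else 0))"

inductive poly_fun :: "(('n \<Rightarrow> complex) \<Rightarrow> complex) \<Rightarrow> bool" where
  const: "poly_fun (\<lambda>z. c)"
| var: "poly_fun (\<lambda>z. z i)"
| add: "poly_fun f \<Longrightarrow> poly_fun g \<Longrightarrow> poly_fun (\<lambda>z. f z + g z)"
| mult: "poly_fun f \<Longrightarrow> poly_fun g \<Longrightarrow> poly_fun (\<lambda>z. f z * g z)"

end

(* At order n >= 1 the recursion is a linear system L_n (K_n, P_n) = R_n, where R_n involves
   only lower coefficients. L_n decouples into two 3x3 blocks, on (K1, K3, P2) and on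
   (K2, P1, P3), with determinants (n-3)(n(n-1)+beta) and (n-2)(n-4)(n+1). So the only
   resonances are n = 2, 3, 4 and at most one further n with n(n-1) = -beta, and at each of
   them the kernel of the singular block is cut out by a single coordinate. Stacking that
   coordinate under the block gives an injective matrix; a left inverse expresses (K_n, P_n)
   linearly through R_n and the value of the coordinate. By induction on n, every
   coefficient is then a polynomial in the four resonance coordinates. *)

theory Submission
  imports Defs
begin

lemma cvec3_component [simp]: "cvec3 x y z $ 1 = x" "cvec3 x y z $ 2 = y" "cvec3 x y z $ 3 = z"
  by (simp_all add: cvec3_def)

lemma cvec3_components: "cvec3 (v$1) (v$2) (v$3) = v"
  by (simp add: vec_eq_iff forall_3)

lemma sum_atMost_split_ends:
  assumes "1 \<le> (n::nat)"
  shows "(\<Sum>i\<le>n. f i) = f 0 + f n + (\<Sum>i\<in>{1..<n}. f i)"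
proof -
  have "{..n} = insert 0 (insert n {1..<n})"
    using assms by auto
  then show ?thesis
    using assms by (simp add: add.assoc)
qed

lemma of_nat_times_pred_inj:
  assumes "1 \<le> n" "1 \<le> n'"
    and eq: "(of_nat n * (of_nat n - 1) :: 'a::field_char_0) = of_nat n' * (of_nat n' - 1)"
  shows "n = n'"
proof -
  have "(of_nat n - of_nat n') * (of_nat n + of_nat n' - 1) = (0 :: 'a)"
    using eq by (simp add: algebra_simps)
  moreover have "(of_nat n + of_nat n' - 1 :: 'a) \<noteq> 0"
  proof -
    have "(of_nat (n + n') :: 'a) \<noteq> 1"
      using assms(1,2) by (simp only: of_nat_eq_1_iff)
    then show ?thesis
      by simp
  qed
  ultimately have "(of_nat n :: 'a) = of_nat n'"
    by simp
  then show ?thesis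
    by simp
qed

section \<open>Linear algebra\<close>

lemma det_nz_kernel_trivial:
  fixes A :: "'a::field^'n^'n"
  assumes "det A \<noteq> 0" and "A *v u = 0"
  shows "u = 0"
proof -
  obtain B where "B ** A = mat 1"
    using assms(1) invertible_det_nz invertible_def by blast
  then have "u = B *v (A *v u)"
    by (simp add: matrix_vector_mul_assoc)
  then show ?thesis
    using assms(2) by simp
qed

definition left_solver :: "'a::field^'n^'m \<Rightarrow> 'a^'n^'p \<Rightarrow> ('a^'m^'n) \<times> ('a^'p^'n)" where
  "left_solver M L = (SOME GH. \<forall>u. u = fst GH *v (M *v u) + snd GH *v (L *v u))"

lemma left_solver_recovers:
  fixes M :: "'a::field^'n^'m" and L :: "'a^'n^'p"
  assumes ker: "\<And>u. M *v u = 0 \<Longrightarrow> L *v u = 0 \<Longrightarrow> u = 0"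
  shows "u = fst (left_solver M L) *v (M *v u) + snd (left_solver M L) *v (L *v u)"
proof -
  define A :: "'a^'n^('m + 'p)" where "A = (\<chi> i. case i of Inl j \<Rightarrow> M $ j | Inr j \<Rightarrow> L $ j)"
  have A_mult: "A *v u = (\<chi> i. case i of Inl j \<Rightarrow> (M *v u) $ j | Inr j \<Rightarrow> (L *v u) $ j)" for u
    by (simp add: A_def vec_eq_iff matrix_vector_mult_def split: sum.split)
  have "\<forall>u. A *v u = 0 \<longrightarrow> u = 0"
  proof (intro allI impI)
    fix u assume "A *v u = 0"
    then have "(A *v u) $ Inl j = 0" "(A *v u) $ Inr i = 0" for i j
      by simp_all
    then have "M *v u = 0" "L *v u = 0"
      by (simp_all add: A_mult vec_eq_iff)
    then show "u = 0" by (rule ker)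
  qed
  then obtain B where B: "B ** A = mat 1"
    by (metis matrix_left_invertible_ker)
  define G :: "'a^'m^'n" where "G = (\<chi> i j. B $ i $ Inl j)"
  define H :: "'a^'p^'n" where "H = (\<chi> i j. B $ i $ Inr j)"
  have "v = G *v (M *v v) + H *v (L *v v)" for v
  proof -
    have "v = B *v (A *v v)"
      by (simp add: B matrix_vector_mul_assoc)
    also have "\<dots> = G *v (M *v v) + H *v (L *v v)"
      unfolding A_mult
      by (simp add: vec_eq_iff matrix_vector_mult_def G_def H_def sum.Plus flip: UNIV_Plus_UNIV)
    finally show ?thesis .
  qed
  then have "\<exists>GH. \<forall>v. v = fst GH *v (M *v v) + snd GH *v (L *v v)"
    by (intro exI[of _ "(G, H)"]) simp
  from someI_ex[OF this] show ?thesis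
    unfolding left_solver_def by blast
qed

section \<open>Polynomial maps\<close>

lemma poly_fun_uminus: "poly_fun f \<Longrightarrow> poly_fun (\<lambda>z. - f z)"
  using poly_fun.mult[OF poly_fun.const[of "-1"]] by simp

lemma poly_fun_diff: "poly_fun f \<Longrightarrow> poly_fun g \<Longrightarrow> poly_fun (\<lambda>z. f z - g z)"
  using poly_fun.add[OF _ poly_fun_uminus] by simp

lemma poly_fun_sum: "(\<And>i. i \<in> S \<Longrightarrow> poly_fun (f i)) \<Longrightarrow> poly_fun (\<lambda>z. \<Sum>i\<in>S. f i z)"
proof (induction S rule: infinite_finite_induct)
  case (insert i S)
  then show ?case
    using poly_fun.add[of "f i" "\<lambda>z. \<Sum>i\<in>S. f i z"] by simp
qed (simp_all add: poly_fun.const)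

lemma poly_fun_If: "poly_fun f \<Longrightarrow> poly_fun g \<Longrightarrow> poly_fun (\<lambda>z. if b then f z else g z)"
  by (cases b) simp_all

definition poly_vec :: "(('n \<Rightarrow> complex) \<Rightarrow> complex^'m) \<Rightarrow> bool" where
  "poly_vec V \<longleftrightarrow> (\<forall>j. poly_fun (\<lambda>z. V z $ j))"

lemma poly_vec_component: "poly_vec V \<Longrightarrow> poly_fun (\<lambda>z. V z $ j)"
  by (simp add: poly_vec_def)

lemma poly_vec_If: "poly_vec U \<Longrightarrow> poly_vec V \<Longrightarrow> poly_vec (\<lambda>z. if b then U z else V z)"
  by (cases b) simp_all

lemma poly_vec_const: "poly_vec (\<lambda>z. v)"
  by (simp add: poly_vec_def poly_fun.const)

lemma poly_vec_vec: "poly_fun f \<Longrightarrow> poly_vec (\<lambda>z. vec (f z))"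
  by (simp add: poly_vec_def)

lemma poly_vec_add: "poly_vec U \<Longrightarrow> poly_vec V \<Longrightarrow> poly_vec (\<lambda>z. U z + V z)"
  by (simp add: poly_vec_def poly_fun.add)

lemma poly_vec_scale: "poly_vec V \<Longrightarrow> poly_vec (\<lambda>z. c *s V z)"
  by (simp add: poly_vec_def poly_fun.mult poly_fun.const)

lemma poly_vec_sum: "(\<And>i. i \<in> S \<Longrightarrow> poly_vec (V i)) \<Longrightarrow> poly_vec (\<lambda>z. \<Sum>i\<in>S. V i z)"
  by (simp add: poly_vec_def poly_fun_sum)

lemma poly_vec_matrix_vector_mult: "poly_vec V \<Longrightarrow> poly_vec (\<lambda>z. M *v V z)"
  unfolding poly_vec_def matrix_vector_mult_def
  by (simp add: poly_fun_sum poly_fun.mult poly_fun.const)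

lemma poly_vec_cvec3:
  assumes "poly_fun f" "poly_fun g" "poly_fun h"
  shows "poly_vec (\<lambda>z. cvec3 (f z) (g z) (h z))"
  unfolding poly_vec_def forall_3 using assms by simp

lemma poly_vec_ccross: "poly_vec U \<Longrightarrow> poly_vec V \<Longrightarrow> poly_vec (\<lambda>z. U z \<times>\<^sub>c V z)"
  unfolding ccross_def
  by (intro poly_vec_cvec3 poly_fun_diff poly_fun.mult poly_vec_component)

lemma poly_vec_omega: "poly_vec V \<Longrightarrow> poly_vec (\<lambda>z. omega m c (V z))"
  unfolding omega_def
  by (intro poly_vec_cvec3 poly_fun.mult poly_fun.const poly_vec_component)

section \<open>The linear systems of the branch \<open>r0 = 0\<close>\<close>

definition coords_A :: "complex^3 \<Rightarrow> complex^3 \<Rightarrow> complex^3" where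
  "coords_A K P = cvec3 (K$1) (K$3) (P$2)"

definition coords_B :: "complex^3 \<Rightarrow> complex^3 \<Rightarrow> complex^3" where
  "coords_B K P = cvec3 (K$2) (P$1) (P$3)"

definition from_coords :: "complex^3 \<Rightarrow> complex^3 \<Rightarrow> (complex^3) \<times> (complex^3)" where
  "from_coords u v = (cvec3 (u$1) (v$1) (u$2), cvec3 (v$2) (u$3) (v$3))"

lemma from_coords_coords: "from_coords (coords_A K P) (coords_B K P) = (K, P)"
  by (simp add: from_coords_def coords_A_def coords_B_def cvec3_components)

locale laurent_branch =
  fixes k :: int and m c a1 a3 :: real and \<epsilon> :: complex
  assumes c_nonzero: "c \<noteq> 0" and m_pos: "0 < m" and a1_nonzero: "a1 \<noteq> 0"
    and eps: "\<epsilon> = 1 \<or> \<epsilon> = -1"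
begin

definition a :: "complex^3" where "a = cvec3 (of_real a1) 0 (of_real a3)"
definition w :: complex where "w = of_real a3 + \<epsilon> * \<i> * of_real a1"
definition h0 :: complex where "h0 = 2 * of_real c / (of_real m * w)"
definition K0 :: "complex^3" where "K0 = cvec3 0 (2 * \<epsilon> * \<i> * of_real c / of_real m) 0"
definition P0 :: "complex^3" where "P0 = cvec3 (\<i> * \<epsilon> * h0) 0 h0"

lemma eps_squared: "\<epsilon> * \<epsilon> = 1"
  using eps by auto

lemma w_nonzero: "w \<noteq> 0"
proof
  assume "w = 0"
  then have "Im w = 0"
    by simp
  then show False
    using eps a1_nonzero by (auto simp: w_def)
qed

lemma a1_eps_a3_nonzero: "of_real a1 + \<epsilon> * \<i> * of_real a3 \<noteq> 0"
proof
  assume "of_real a1 + \<epsilon> * \<i> * of_real a3 = 0"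
  then have "Re (of_real a1 + \<epsilon> * \<i> * of_real a3) = 0"
    by simp
  then show False
    using eps a1_nonzero by auto
qed

definition lin_K :: "nat \<Rightarrow> complex^3 \<Rightarrow> complex^3 \<Rightarrow> complex^3" where
  "lin_K n K P = (of_nat n - 1) *s K - K0 \<times>\<^sub>c omega m c K - K \<times>\<^sub>c omega m c K0 - P \<times>\<^sub>c a"

definition lin_P :: "nat \<Rightarrow> complex^3 \<Rightarrow> complex^3 \<Rightarrow> complex^3" where
  "lin_P n K P = (of_nat n - 2) *s P - P0 \<times>\<^sub>c omega m c K - P \<times>\<^sub>c omega m c K0"

definition rhs_K :: "(nat \<Rightarrow> complex^3) \<Rightarrow> nat \<Rightarrow> complex^3" where
  "rhs_K K n = (\<Sum>i\<in>{1..<n}. K i \<times>\<^sub>c omega m c (K (n - i)))"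

definition rhs_P :: "(nat \<Rightarrow> complex^3) \<Rightarrow> (nat \<Rightarrow> complex^3) \<Rightarrow> nat \<Rightarrow> complex^3" where
  "rhs_P K P n = (\<Sum>i\<in>{1..<n}. P i \<times>\<^sub>c omega m c (K (n - i)))
     + (if 2 \<le> n then of_int k *s (K (n - 2) \<times>\<^sub>c a) else 0)"

lemma laurent_rec_linear_system:
  assumes "K 0 = K0" "P 0 = P0" "laurent_rec k m c a K P" "1 \<le> n"
  shows "lin_K n (K n) (P n) = rhs_K K n" "lin_P n (K n) (P n) = rhs_P K P n"
proof -
  from assms(3,4) have
    "(of_nat n - 1) *s K n = (\<Sum>i\<le>n. K i \<times>\<^sub>c omega m c (K (n - i))) + P n \<times>\<^sub>c a"
    "(of_nat n - 2) *s P n = (\<Sum>i\<le>n. P i \<times>\<^sub>c omega m c (K (n - i)))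
       + (if 2 \<le> n then of_int k *s (K (n - 2) \<times>\<^sub>c a) else 0)"
    unfolding laurent_rec_def by auto
  then show "lin_K n (K n) (P n) = rhs_K K n" "lin_P n (K n) (P n) = rhs_P K P n"
    unfolding sum_atMost_split_ends[OF assms(4)] lin_K_def lin_P_def rhs_K_def rhs_P_def
    using assms(1,2) by (simp_all add: algebra_simps)
qed

text \<open>The entries come from \<open>lin_K\<close> and \<open>lin_P\<close> after inserting \<open>K0\<close> and \<open>P0\<close>
  and using \<open>h0 m / c = 2 / w\<close>.\<close>

definition block_A :: "nat \<Rightarrow> complex^3^3" where
  "block_A n = vector [
     vector [of_nat n - 1, 2 * \<epsilon> * \<i> * (of_real m - 1) / of_real m, - of_real a3],
     vector [0, of_nat n - 1, of_real a1],
     vector [- 2 / w, 2 * \<i> * \<epsilon> / (of_real m * w), of_nat n - 2]]"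

definition block_B :: "nat \<Rightarrow> complex^3^3" where
  "block_B n = vector [
     vector [of_nat n - 1, of_real a3, - of_real a1],
     vector [2 / w, of_nat n - 2, 2 * \<epsilon> * \<i>],
     vector [- 2 * \<i> * \<epsilon> / w, - 2 * \<epsilon> * \<i>, of_nat n - 2]]"

lemma block_A_mult: "block_A n *v coords_A K P = coords_A (lin_K n K P) (lin_P n K P)"
  using c_nonzero m_pos w_nonzero
  by (simp add: vec_eq_iff forall_3 matrix_vector_mult_def sum_3 block_A_def coords_A_def
      lin_K_def lin_P_def ccross_def omega_def K0_def P0_def a_def h0_def field_simps)

lemma block_B_mult: "block_B n *v coords_B K P = coords_B (lin_K n K P) (lin_P n K P)"
  using c_nonzero m_pos w_nonzero
  by (simp add: vec_eq_iff forall_3 matrix_vector_mult_def sum_3 block_B_def coords_B_def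
      lin_K_def lin_P_def ccross_def omega_def K0_def P0_def a_def h0_def field_simps)

definition \<beta> :: complex where "\<beta> = 2 * \<epsilon> * \<i> * of_real a1 * (of_real m - 1) / (of_real m * w)"

lemma det_block_A: "det (block_A n) = (of_nat n - 3) * (of_nat n * (of_nat n - 1) + \<beta>)"
proof -
  have nonzero: "m \<noteq> 0" "w \<noteq> 0"
    using m_pos w_nonzero by simp_all
  have "\<i> * \<i> = -1"
    by simp
  then show ?thesis
    unfolding det_3 block_A_def \<beta>_def
    by (simp add: divide_simps nonzero) (use w_def eps_squared in algebra)
qed

lemma det_block_B: "det (block_B n) = (of_nat n - 2) * (of_nat n - 4) * (of_nat n + 1)"
proof -
  have "\<i> * \<i> = -1"
    by simp
  with w_nonzero show ?thesis
    unfolding det_3 block_B_def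
    by (simp add: field_simps) (use w_def eps_squared in algebra)
qed

lemma det_block_B_eq_0:
  assumes "det (block_B n) = 0"
  shows "n = 2 \<or> n = 4"
proof -
  have "(of_nat n - 2) * (of_nat n - 4) * of_nat (Suc n) = (0::complex)"
    using assms by (simp add: det_block_B add.commute)
  then have "of_nat n = (of_nat 2 :: complex) \<or> of_nat n = (of_nat 4 :: complex)"
    by (simp del: of_nat_Suc)
  then show ?thesis
    by (simp only: of_nat_eq_iff)
qed

lemma det_block_A_eq_0:
  assumes "det (block_A n) = 0" "n \<noteq> 3"
  shows "of_nat n * (of_nat n - 1) = - \<beta>"
proof -
  have "of_nat n \<noteq> (of_nat 3 :: complex)"
    using assms(2) by (simp only: of_nat_eq_iff) simp
  then show ?thesis
    using assms(1) by (simp add: det_block_A eq_neg_iff_add_eq_0)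
qed

text \<open>If \<open>block_A\<close> has no resonance other than 3, this is an unspecified number, and
  the constant read off at it is never used.\<close>

definition extra_resonance :: nat where
  "extra_resonance = (SOME n. 1 \<le> n \<and> n \<noteq> 3 \<and> det (block_A n) = 0)"

lemma extra_resonance_unique:
  assumes "1 \<le> n" "n \<noteq> 3" "det (block_A n) = 0"
  shows "n = extra_resonance"
proof -
  let ?r = extra_resonance
  have r: "1 \<le> ?r \<and> ?r \<noteq> 3 \<and> det (block_A ?r) = 0"
    unfolding extra_resonance_def by (rule someI[of _ n]) (use assms in auto)
  then have "of_nat n * (of_nat n - 1) = (of_nat ?r * (of_nat ?r - 1) :: complex)"
    using assms det_block_A_eq_0 by simp
  with assms(1) r show ?thesis
    using of_nat_times_pred_inj by blast
qed

lemma block_A_kernel: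
  assumes "block_A n *v u = 0" and "det (block_A n) = 0 \<Longrightarrow> u $ 2 = 0"
  shows "u = 0"
proof (cases "det (block_A n) = 0")
  case True
  have "(block_A n *v u) $ 2 = 0" "(block_A n *v u) $ 3 = 0"
    using assms(1) by simp_all
  then have "(of_nat n - 1) * u $ 2 + of_real a1 * u $ 3 = 0"
    "- 2 / w * u $ 1 + 2 * \<i> * \<epsilon> / (of_real m * w) * u $ 2 + (of_nat n - 2) * u $ 3 = 0"
    by (simp_all add: block_A_def matrix_vector_mult_def sum_3)
  then show ?thesis
    using assms(2)[OF True] a1_nonzero w_nonzero by (simp add: vec_eq_iff forall_3)
next
  case False
  then show ?thesis
    using assms(1) by (rule det_nz_kernel_trivial)
qed

lemma block_B_kernel:
  assumes "block_B n *v u = 0" and "n = 2 \<Longrightarrow> u $ 3 = 0" and "n = 4 \<Longrightarrow> u $ 1 = 0"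
  shows "u = 0"
proof -
  have "(block_B n *v u) $ 1 = 0" "(block_B n *v u) $ 2 = 0" "(block_B n *v u) $ 3 = 0"
    using assms(1) by simp_all
  then have eqs: "(of_nat n - 1) * u $ 1 + of_real a3 * u $ 2 - of_real a1 * u $ 3 = 0"
    "2 / w * u $ 1 + (of_nat n - 2) * u $ 2 + 2 * \<epsilon> * \<i> * u $ 3 = 0"
    "- 2 * \<i> * \<epsilon> / w * u $ 1 - 2 * \<epsilon> * \<i> * u $ 2 + (of_nat n - 2) * u $ 3 = 0"
    by (simp_all add: block_B_def matrix_vector_mult_def sum_3)
  consider "n = 2" | "n = 4" | "det (block_B n) \<noteq> 0"
    using det_block_B_eq_0 by blast
  then show ?thesis
  proof cases
    case 1
    then have u3: "u $ 3 = 0"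
      by (rule assms(2))
    with eqs(2) 1 w_nonzero have u1: "u $ 1 = 0"
      by simp
    with eqs(3) u3 1 eps have "u $ 2 = 0"
      by auto
    with u1 u3 show ?thesis
      by (simp add: vec_eq_iff forall_3)
  next
    case 2
    then have u1: "u $ 1 = 0"
      by (rule assms(3))
    with eqs(2) 2 have "2 * (u $ 2 + \<epsilon> * \<i> * u $ 3) = 0"
      by (simp add: algebra_simps)
    then have "u $ 2 + \<epsilon> * \<i> * u $ 3 = 0"
      by (simp only: mult_eq_0_iff) simp
    then have u2: "u $ 2 = - (\<epsilon> * \<i> * u $ 3)"
      by (simp only: eq_neg_iff_add_eq_0)
    have "of_real a3 * u $ 2 - of_real a1 * u $ 3 = 0"
      using eqs(1) u1 by simp
    with u2 have "(of_real a1 + \<epsilon> * \<i> * of_real a3) * u $ 3 = 0"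
      by algebra
    with a1_eps_a3_nonzero u1 u2 show ?thesis
      by (simp add: vec_eq_iff forall_3)
  next
    case 3
    then show ?thesis
      using assms(1) by (rule det_nz_kernel_trivial)
  qed
qed

definition param_row_A :: "nat \<Rightarrow> complex^3^1" where
  "param_row_A n = (\<chi> i j. if det (block_A n) = 0 \<and> j = 2 then 1 else 0)"

definition param_row_B :: "nat \<Rightarrow> complex^3^1" where
  "param_row_B n = (\<chi> i j. if n = 2 \<and> j = 3 \<or> n = 4 \<and> j = 1 then 1 else 0)"

lemma param_row_A_mult:
  "param_row_A n *v u = vec (if det (block_A n) = 0 then u $ 2 else 0)"
  by (simp add: param_row_A_def vec_eq_iff matrix_vector_mult_def sum_3)

lemma param_row_B_mult:
  "param_row_B n *v u = vec (if n = 2 then u $ 3 else if n = 4 then u $ 1 else 0)"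
  by (simp add: param_row_B_def vec_eq_iff matrix_vector_mult_def sum_3)

abbreviation "solver_A n \<equiv> left_solver (block_A n) (param_row_A n)"
abbreviation "solver_B n \<equiv> left_solver (block_B n) (param_row_B n)"

lemma solver_A_recovers:
  "u = fst (solver_A n) *v (block_A n *v u) + snd (solver_A n) *v (param_row_A n *v u)"
proof (rule left_solver_recovers)
  fix v
  assume block: "block_A n *v v = 0" and row: "param_row_A n *v v = 0"
  have "det (block_A n) = 0 \<Longrightarrow> v $ 2 = 0"
    using row by (simp add: param_row_A_mult vec_eq_iff)
  with block show "v = 0"
    by (rule block_A_kernel)
qed

lemma solver_B_recovers:
  "u = fst (solver_B n) *v (block_B n *v u) + snd (solver_B n) *v (param_row_B n *v u)"
proof (rule left_solver_recovers)
  fix v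
  assume block: "block_B n *v v = 0" and row: "param_row_B n *v v = 0"
  have "n = 2 \<Longrightarrow> v $ 3 = 0" "n = 4 \<Longrightarrow> v $ 1 = 0"
    using row by (simp_all add: param_row_B_mult vec_eq_iff)
  with block show "v = 0"
    by (rule block_B_kernel)
qed

definition param_A :: "(4 \<Rightarrow> complex) \<Rightarrow> nat \<Rightarrow> complex" where
  "param_A z n = (if det (block_A n) = 0 then z (if n = 3 then 2 else 3) else 0)"

definition param_B :: "(4 \<Rightarrow> complex) \<Rightarrow> nat \<Rightarrow> complex" where
  "param_B z n = (if n = 2 then z 0 else if n = 4 then z 1 else 0)"

definition next_coeff ::
  "(4 \<Rightarrow> complex) \<Rightarrow> nat \<Rightarrow> (nat \<Rightarrow> complex^3) \<Rightarrow> (nat \<Rightarrow> complex^3) \<Rightarrow> (complex^3) \<times> (complex^3)"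
where
  "next_coeff z n K P = from_coords
     (fst (solver_A n) *v coords_A (rhs_K K n) (rhs_P K P n) + snd (solver_A n) *v vec (param_A z n))
     (fst (solver_B n) *v coords_B (rhs_K K n) (rhs_P K P n) + snd (solver_B n) *v vec (param_B z n))"

text \<open>Each constant is the coordinate that cuts out the kernel of the singular block at one
  resonance: 2 and 4 for \<open>block_B\<close>, 3 and \<open>extra_resonance\<close> for \<open>block_A\<close>.\<close>

definition resonance_params :: "(nat \<Rightarrow> complex^3) \<Rightarrow> (nat \<Rightarrow> complex^3) \<Rightarrow> 4 \<Rightarrow> complex" where
  "resonance_params K P j =
     (if j = 0 then P 2 $ 3 else if j = 1 then K 4 $ 2 else if j = 2 then K 3 $ 3
      else K extra_resonance $ 3)"

lemma param_row_A_resonance_params: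
  assumes "1 \<le> n"
  shows "param_row_A n *v coords_A (K n) (P n) = vec (param_A (resonance_params K P) n)"
proof (cases "det (block_A n) = 0 \<and> n \<noteq> 3")
  case True
  then have "n = extra_resonance"
    using extra_resonance_unique[OF assms] by blast
  with True show ?thesis
    by (simp add: param_row_A_mult param_A_def resonance_params_def coords_A_def)
next
  case False
  then show ?thesis
    by (auto simp: param_row_A_mult param_A_def resonance_params_def coords_A_def)
qed

lemma param_row_B_resonance_params:
  "param_row_B n *v coords_B (K n) (P n) = vec (param_B (resonance_params K P) n)"
  by (simp add: param_row_B_mult param_B_def resonance_params_def coords_B_def)

lemma next_coeff_solution:
  assumes "K 0 = K0" "P 0 = P0" "laurent_rec k m c a K P" "1 \<le> n"
  shows "next_coeff (resonance_params K P) n K P = (K n, P n)"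
proof -
  let ?z = "resonance_params K P"
  note system = laurent_rec_linear_system[OF assms]
  have "coords_A (K n) (P n) = fst (solver_A n) *v (block_A n *v coords_A (K n) (P n))
      + snd (solver_A n) *v (param_row_A n *v coords_A (K n) (P n))"
    by (rule solver_A_recovers)
  also have "\<dots> = fst (solver_A n) *v coords_A (rhs_K K n) (rhs_P K P n)
      + snd (solver_A n) *v vec (param_A ?z n)"
    by (simp only: block_A_mult system param_row_A_resonance_params[OF assms(4)])
  finally have A: "coords_A (K n) (P n) = fst (solver_A n) *v coords_A (rhs_K K n) (rhs_P K P n)
      + snd (solver_A n) *v vec (param_A ?z n)" .
  have "coords_B (K n) (P n) = fst (solver_B n) *v (block_B n *v coords_B (K n) (P n))
      + snd (solver_B n) *v (param_row_B n *v coords_B (K n) (P n))"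
    by (rule solver_B_recovers)
  also have "\<dots> = fst (solver_B n) *v coords_B (rhs_K K n) (rhs_P K P n)
      + snd (solver_B n) *v vec (param_B ?z n)"
    by (simp only: block_B_mult system param_row_B_resonance_params)
  finally have B: "coords_B (K n) (P n) = fst (solver_B n) *v coords_B (rhs_K K n) (rhs_P K P n)
      + snd (solver_B n) *v vec (param_B ?z n)" .
  show ?thesis
    unfolding next_coeff_def A [symmetric] B [symmetric] by (rule from_coords_coords)
qed

lemma rhs_K_cong: "(\<And>i. i < n \<Longrightarrow> K' i = K i) \<Longrightarrow> rhs_K K' n = rhs_K K n"
  unfolding rhs_K_def by (intro sum.cong) auto

lemma rhs_P_cong:
  "(\<And>i. i < n \<Longrightarrow> K' i = K i) \<Longrightarrow> (\<And>i. i < n \<Longrightarrow> P' i = P i) \<Longrightarrow> rhs_P K' P' n = rhs_P K P n"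
  unfolding rhs_P_def by (intro arg_cong2[where f = "(+)"] sum.cong) auto

lemma next_coeff_cong:
  assumes "\<And>i. i < n \<Longrightarrow> K' i = K i" "\<And>i. i < n \<Longrightarrow> P' i = P i"
  shows "next_coeff z n K' P' = next_coeff z n K P"
  using rhs_K_cong[OF assms(1)] rhs_P_cong[OF assms] by (simp add: next_coeff_def)

function coeffs :: "(4 \<Rightarrow> complex) \<Rightarrow> nat \<Rightarrow> (complex^3) \<times> (complex^3)" where
  "coeffs z n =
     (if n = 0 then (K0, P0)
      else next_coeff z n (\<lambda>i. if i < n then fst (coeffs z i) else 0)
                          (\<lambda>i. if i < n then snd (coeffs z i) else 0))"
  by auto
termination
  by (relation "Wellfounded.measure snd") auto

declare coeffs.simps [simp del]

lemma coeffs_solution: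
  assumes "K 0 = K0" "P 0 = P0" "laurent_rec k m c a K P"
  shows "coeffs (resonance_params K P) n = (K n, P n)"
proof (induction n rule: less_induct)
  case (less n)
  show ?case
  proof (cases "n = 0")
    case True
    then show ?thesis
      using assms(1,2) by (simp add: coeffs.simps)
  next
    case False
    let ?z = "resonance_params K P"
    have "coeffs ?z n = next_coeff ?z n (\<lambda>i. if i < n then fst (coeffs ?z i) else 0)
        (\<lambda>i. if i < n then snd (coeffs ?z i) else 0)"
      using False by (simp add: coeffs.simps[of ?z n])
    also have "\<dots> = next_coeff ?z n K P"
      by (rule next_coeff_cong) (simp_all add: less)
    finally have "coeffs ?z n = next_coeff ?z n K P" .
    then show ?thesis
      using False next_coeff_solution[OF assms] by simp
  qed
qed

lemma poly_fun_param_A: "poly_fun (\<lambda>z. param_A z n)"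
  unfolding param_A_def by (intro poly_fun_If poly_fun.var poly_fun.const)

lemma poly_fun_param_B: "poly_fun (\<lambda>z. param_B z n)"
  unfolding param_B_def by (intro poly_fun_If poly_fun.var poly_fun.const)

lemma poly_vec_coords_A: "poly_vec U \<Longrightarrow> poly_vec V \<Longrightarrow> poly_vec (\<lambda>z. coords_A (U z) (V z))"
  unfolding coords_A_def by (intro poly_vec_cvec3 poly_vec_component)

lemma poly_vec_coords_B: "poly_vec U \<Longrightarrow> poly_vec V \<Longrightarrow> poly_vec (\<lambda>z. coords_B (U z) (V z))"
  unfolding coords_B_def by (intro poly_vec_cvec3 poly_vec_component)

lemma poly_vec_from_coords:
  assumes "poly_vec U" "poly_vec V"
  shows "poly_vec (\<lambda>z. fst (from_coords (U z) (V z)))" "poly_vec (\<lambda>z. snd (from_coords (U z) (V z)))"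
  unfolding from_coords_def fst_conv snd_conv
  by (intro poly_vec_cvec3 poly_vec_component assms)+

lemma poly_vec_rhs_K: "(\<And>i. poly_vec (\<lambda>z. K z i)) \<Longrightarrow> poly_vec (\<lambda>z. rhs_K (K z) n)"
  unfolding rhs_K_def by (intro poly_vec_sum poly_vec_ccross poly_vec_omega)

lemma poly_vec_rhs_P:
  "(\<And>i. poly_vec (\<lambda>z. K z i)) \<Longrightarrow> (\<And>i. poly_vec (\<lambda>z. P z i))
    \<Longrightarrow> poly_vec (\<lambda>z. rhs_P (K z) (P z) n)"
  unfolding rhs_P_def
  by (intro poly_vec_add poly_vec_sum poly_vec_ccross poly_vec_omega poly_vec_If poly_vec_scale
      poly_vec_const)

lemma poly_vec_next_coeff:
  assumes "\<And>i. poly_vec (\<lambda>z. K z i)" "\<And>i. poly_vec (\<lambda>z. P z i)"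
  shows "poly_vec (\<lambda>z. fst (next_coeff z n (K z) (P z)))"
    "poly_vec (\<lambda>z. snd (next_coeff z n (K z) (P z)))"
proof -
  note rhs = poly_vec_rhs_K[OF assms(1)] poly_vec_rhs_P[OF assms]
  note block = poly_vec_add poly_vec_matrix_vector_mult poly_vec_vec
    poly_vec_coords_A poly_vec_coords_B poly_fun_param_A poly_fun_param_B rhs
  show "poly_vec (\<lambda>z. fst (next_coeff z n (K z) (P z)))"
    "poly_vec (\<lambda>z. snd (next_coeff z n (K z) (P z)))"
    unfolding next_coeff_def by (intro poly_vec_from_coords block)+
qed

lemma poly_vec_coeffs: "poly_vec (\<lambda>z. fst (coeffs z n)) \<and> poly_vec (\<lambda>z. snd (coeffs z n))"
proof (induction n rule: less_induct)
  case (less n)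
  show ?case
  proof (cases "n = 0")
    case True
    then show ?thesis
      by (simp add: coeffs.simps poly_vec_const)
  next
    case False
    have "poly_vec (\<lambda>z. if i < n then fst (coeffs z i) else 0)
        \<and> poly_vec (\<lambda>z. if i < n then snd (coeffs z i) else 0)" for i
      using less by (cases "i < n") (simp_all add: poly_vec_const)
    then show ?thesis
      unfolding coeffs.simps[of _ n] using False by (simp add: poly_vec_next_coeff)
  qed
qed

end

theorem theorem2:
  fixes k :: int and c m a1 a3 :: real and \<epsilon> :: complex
  assumes "k \<in> {0, 1, -1}" and "c \<noteq> 0" and "m > 0" and "m \<noteq> 1" and "a1 \<noteq> 0"
    and "\<epsilon> = 1 \<or> \<epsilon> = -1"
  defines "a \<equiv> cvec3 (of_real a1) 0 (of_real a3)"
    and "h0 \<equiv> 2 * of_real c / (of_real m * (of_real a3 + \<epsilon> * \<i> * of_real a1))"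
  shows "\<exists>(\<Phi> :: (4 \<Rightarrow> complex) \<Rightarrow> nat \<Rightarrow> complex^3) (\<Psi> :: (4 \<Rightarrow> complex) \<Rightarrow> nat \<Rightarrow> complex^3).
           (\<forall>n j. poly_fun (\<lambda>z. \<Phi> z n $ j) \<and> poly_fun (\<lambda>z. \<Psi> z n $ j)) \<and>
           (\<forall>K P. K 0 = cvec3 0 (2 * \<epsilon> * \<i> * of_real c / of_real m) 0
                 \<and> P 0 = cvec3 (\<i> * \<epsilon> * h0) 0 h0
                 \<and> laurent_rec k m c a K P
                 \<longrightarrow> (\<exists>z. K = \<Phi> z \<and> P = \<Psi> z))"
proof -
  interpret branch: laurent_branch k m c a1 a3 \<epsilon>
    using assms(2,3,5,6) by unfold_locales
  have data: "branch.a = a" "branch.K0 = cvec3 0 (2 * \<epsilon> * \<i> * of_real c / of_real m) 0"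
    "branch.P0 = cvec3 (\<i> * \<epsilon> * h0) 0 h0"
    by (simp_all add: a_def h0_def branch.a_def branch.K0_def branch.P0_def branch.h0_def
        branch.w_def)
  show ?thesis
  proof (rule exI[of _ "\<lambda>z n. fst (branch.coeffs z n)"], rule exI[of _ "\<lambda>z n. snd (branch.coeffs z n)"],
      intro conjI allI impI)
    fix n j
    show "poly_fun (\<lambda>z. fst (branch.coeffs z n) $ j)" "poly_fun (\<lambda>z. snd (branch.coeffs z n) $ j)"
      using branch.poly_vec_coeffs[of n] by (simp_all add: poly_vec_def)
  next
    fix K P
    assume "K 0 = cvec3 0 (2 * \<epsilon> * \<i> * of_real c / of_real m) 0
      \<and> P 0 = cvec3 (\<i> * \<epsilon> * h0) 0 h0 \<and> laurent_rec k m c a K P"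
    then have "branch.coeffs (branch.resonance_params K P) n = (K n, P n)" for n
      by (intro branch.coeffs_solution) (simp_all add: data)
    then show "\<exists>z. K = (\<lambda>n. fst (branch.coeffs z n)) \<and> P = (\<lambda>n. snd (branch.coeffs z n))"
      by (intro exI[of _ "branch.resonance_params K P"]) (simp add: fun_eq_iff)
  qed
qed

end
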